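(* Let $a,b,q$ be parameters (complex numbers or indeterminates) such that no denominator below vanishes, let $c(n,a,b,q)=\frac{(b;q)_n}{(a;q)_n}$, and for integers $n\ge1$, $m\ge0$ let $$d(n,m,a,b,q)=\det\big(c(i+j+m,a,b,q)\big)_{i,j=0}^{n-1}.$$ Then $$d(n,0,a,b,q)=q^{2\binom{n}{3}}\prod_{k=1}^{n-1}\frac{(b;q)_k\,(q;q)_k\prod_{j=0}^{k-1}(b-q^ja)}{(q^{k-1}a;q)_k\,(a;q)_{2k}}$$ and $$d(n,m,a,b,q)=d(n,0,a,b,q)\,q^{m\binom{n}{2}}\prod_{j=0}^{m-1}\frac{(q^jb;q)_n}{(q^{n-1+j}a;q)_n}.$$
   Context: Notation: $(x;q)_n=\prod_{j=0}^{n-1}(1-q^jx)$, with $(x;q)_0=1$; empty products equal $1$. *)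

theory Defs
  imports Complex_Main "Jordan_Normal_Form.Determinant"
begin

definition qpoch :: "complex \<Rightarrow> complex \<Rightarrow> nat \<Rightarrow> complex" where
  "qpoch x q n = (\<Prod>j<n. 1 - q ^ j * x)"

definition cseq :: "nat \<Rightarrow> complex \<Rightarrow> complex \<Rightarrow> complex \<Rightarrow> complex" where
  "cseq n a b q = qpoch b q n / qpoch a q n"

definition dhank :: "nat \<Rightarrow> nat \<Rightarrow> complex \<Rightarrow> complex \<Rightarrow> complex \<Rightarrow> complex" where
  "dhank n m a b q = det (mat n n (\<lambda>(i, j). cseq (i + j + m) a b q))"

end

theory Submission
  imports Defs
begin

(* Let H = (c(i+j))_{i,j<n} and let w_{k,j} be the coefficients of \<Prod>_{t<k} (z - q^t).
   Multiplying H on the left by the unit lower triangular matrix with rows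
   \<alpha>_{k,j} = w_{k,j} (q^j b;q)_{k-j} / (q^{k-1+j} a;q)_{k-j} turns the (k,i) entry into
   (b;q)_k / (a;q)_{2k-1} times \<Sum>_j w_{k,j} p(q^j) for a polynomial p of degree k - 1 when i < k.
   This vanishes, since \<Sum>_j w_{k,j} q^{jm} = \<Prod>_t (q^m - q^t) = 0 for m < k, so the product is
   upper triangular and d(n,0) is the product of its diagonal entries.  A diagonal entry is a sum
   \<Sum>_j w_{k,j} p(q^j) / (1 - q^j A) with deg p = k, evaluated by the partial fraction identity
   \<Sum>_j w_{k,j} q^{jm} / (1 - q^j A) = (-1)^k q^{k(k-1)/2} (q;q)_k A^{k-m} / (A;q)_{k+1}.
   For m > 0, c(k+1;a,b) = c(1;a,b) c(k;qa,qb) gives d(n,m+1;a,b) = c(1;a,b)^n d(n,m;qa,qb),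
   and the second formula follows by induction on m from the first. *)

subsection \<open>\<open>q\<close>-Pochhammer symbols\<close>

lemma qpoch_0 [simp]: "qpoch x q 0 = 1"
  by (simp add: qpoch_def)

lemma qpoch_Suc: "qpoch x q (Suc n) = qpoch x q n * (1 - q ^ n * x)"
  by (simp add: qpoch_def)

lemma qpoch_add: "qpoch x q (m + n) = qpoch x q m * qpoch (q ^ m * x) q n"
  by (induction n) (auto simp: qpoch_Suc power_add mult_ac)

lemma qpoch_Suc_left: "qpoch x q (Suc n) = (1 - x) * qpoch (q * x) q n"
  using qpoch_add[of x q 1 n] by (simp add: qpoch_def)

lemma qpoch_shift_neq_0:
  assumes "qpoch a q N \<noteq> 0" and "s + r \<le> N"
  shows "qpoch (q ^ s * a) q r \<noteq> 0"
proof -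
  obtain d where N: "N = (s + r) + d"
    using assms(2) le_add_diff_inverse by metis
  have "qpoch a q N = qpoch a q s * qpoch (q ^ s * a) q r * qpoch (q ^ (s + r) * a) q d"
    unfolding N qpoch_add by simp
  with assms(1) show ?thesis by auto
qed

lemma qpoch_neq_0_le: "qpoch a q N \<noteq> 0 \<Longrightarrow> r \<le> N \<Longrightarrow> qpoch a q r \<noteq> 0"
  using qpoch_shift_neq_0[of a q N 0 r] by simp

lemma qpoch_factor_neq_0: "qpoch a q N \<noteq> 0 \<Longrightarrow> t < N \<Longrightarrow> 1 - q ^ t * a \<noteq> 0"
  unfolding qpoch_def by auto

lemma choose_two_Suc: "Suc k choose 2 = (k choose 2) + k"
  by (simp add: numeral_2_eq_2)

lemma prod_power_lessThan: "(\<Prod>s<k. (q::'a::comm_monoid_mult) ^ s) = q ^ (k choose 2)"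
  by (induction k) (simp_all add: choose_two_Suc power_add numeral_2_eq_2 mult_ac)

lemma sum_choose_two_atLeast1: "(\<Sum>k = 1..n - 1. k choose 2) = n choose 3"
proof (cases n)
  case (Suc m)
  have "(\<Sum>k = 1..m. k choose 2) = (\<Sum>k\<le>m. k choose 2)"
    by (simp add: atMost_atLeast0 sum.atLeast_Suc_atMost numeral_2_eq_2)
  also have "\<dots> = Suc m choose 3"
    by (simp add: sum_choose_upper numeral_3_eq_3)
  finally show ?thesis using Suc by simp
qed simp

subsection \<open>Coefficients of \<open>\<Prod>t<k. z - q^t\<close>\<close>

fun qroot_coeff :: "complex \<Rightarrow> nat \<Rightarrow> nat \<Rightarrow> complex" where
  "qroot_coeff q 0 j = (if j = 0 then 1 else 0)"
| "qroot_coeff q (Suc k) j =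
     (if j = 0 then 0 else qroot_coeff q k (j - 1)) - q ^ k * qroot_coeff q k j"

lemma qroot_coeff_eq_0: "k < j \<Longrightarrow> qroot_coeff q k j = 0"
  by (induction k arbitrary: j) auto

lemma qroot_coeff_diag [simp]: "qroot_coeff q k k = 1"
  by (induction k) (auto simp: qroot_coeff_eq_0)

lemma qroot_coeff_prod: "(\<Sum>j\<le>k. qroot_coeff q k j * z ^ j) = (\<Prod>t<k. z - q ^ t)"
proof (induction k)
  case (Suc k)
  have "(\<Sum>j\<le>Suc k. qroot_coeff q (Suc k) j * z ^ j)
      = (\<Sum>j\<le>Suc k. (if j = 0 then 0 else qroot_coeff q k (j - 1)) * z ^ j)
        - q ^ k * (\<Sum>j\<le>Suc k. qroot_coeff q k j * z ^ j)"
    by (simp add: algebra_simps sum_subtractf sum_distrib_left)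
  also have "(\<Sum>j\<le>Suc k. (if j = 0 then 0 else qroot_coeff q k (j - 1)) * z ^ j)
      = z * (\<Sum>j\<le>k. qroot_coeff q k j * z ^ j)"
    by (subst sum.atMost_Suc_shift) (simp add: sum_distrib_left mult_ac)
  also have "(\<Sum>j\<le>Suc k. qroot_coeff q k j * z ^ j) = (\<Sum>j\<le>k. qroot_coeff q k j * z ^ j)"
    by (simp add: qroot_coeff_eq_0)
  finally show ?case using Suc by (simp add: algebra_simps)
qed simp

lemma qroot_coeff_prod_shifted:
  "(\<Sum>j\<le>k. qroot_coeff q k j * q ^ (k - j) * z ^ j) = (\<Prod>t<k. z - q ^ Suc t)"
proof (induction k)
  case (Suc k)
  have "(\<Sum>j\<le>Suc k. qroot_coeff q (Suc k) j * q ^ (Suc k - j) * z ^ j)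
      = (\<Sum>j\<le>Suc k. (if j = 0 then 0 else qroot_coeff q k (j - 1)) * q ^ (Suc k - j) * z ^ j)
        - q ^ k * (\<Sum>j\<le>Suc k. qroot_coeff q k j * q ^ (Suc k - j) * z ^ j)"
    by (simp add: algebra_simps sum_subtractf sum_distrib_left)
  also have "(\<Sum>j\<le>Suc k. (if j = 0 then 0 else qroot_coeff q k (j - 1)) * q ^ (Suc k - j) * z ^ j)
      = z * (\<Sum>j\<le>k. qroot_coeff q k j * q ^ (k - j) * z ^ j)"
    by (subst sum.atMost_Suc_shift) (simp add: sum_distrib_left mult_ac)
  also have "(\<Sum>j\<le>Suc k. qroot_coeff q k j * q ^ (Suc k - j) * z ^ j)
      = q * (\<Sum>j\<le>k. qroot_coeff q k j * q ^ (k - j) * z ^ j)"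
    by (simp add: qroot_coeff_eq_0 sum_distrib_left Suc_diff_le mult_ac)
  finally show ?case using Suc by (simp add: algebra_simps)
qed simp

text \<open>Splitting off the root \<open>1\<close> instead of \<open>q^k\<close> gives the second recursion.\<close>

lemma qroot_coeff_Suc_left:
  "qroot_coeff q (Suc k) j =
     (if j = 0 then 0 else q ^ (Suc k - j) * qroot_coeff q k (j - 1)) - q ^ (k - j) * qroot_coeff q k j"
proof (cases "j \<le> Suc k")
  case True
  define R where "R j = (if j = 0 then 0 else q ^ (Suc k - j) * qroot_coeff q k (j - 1))
                        - q ^ (k - j) * qroot_coeff q k j" for j
  have "(\<Sum>j\<le>Suc k. qroot_coeff q (Suc k) j * z ^ j) = (\<Sum>j\<le>Suc k. R j * z ^ j)" for z
  proof -
    have "(\<Sum>j\<le>Suc k. R j * z ^ j)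
        = (\<Sum>j\<le>Suc k. (if j = 0 then 0 else q ^ (Suc k - j) * qroot_coeff q k (j - 1)) * z ^ j)
          - (\<Sum>j\<le>Suc k. q ^ (k - j) * qroot_coeff q k j * z ^ j)"
      by (simp add: R_def algebra_simps sum_subtractf)
    also have "(\<Sum>j\<le>Suc k. (if j = 0 then 0 else q ^ (Suc k - j) * qroot_coeff q k (j - 1)) * z ^ j)
        = z * (\<Sum>j\<le>k. qroot_coeff q k j * q ^ (k - j) * z ^ j)"
      by (subst sum.atMost_Suc_shift) (simp add: sum_distrib_left mult_ac)
    also have "(\<Sum>j\<le>Suc k. q ^ (k - j) * qroot_coeff q k j * z ^ j)
        = (\<Sum>j\<le>k. qroot_coeff q k j * q ^ (k - j) * z ^ j)"
      by (simp add: qroot_coeff_eq_0 mult_ac)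
    finally have "(\<Sum>j\<le>Suc k. R j * z ^ j)
        = z * (\<Sum>j\<le>k. qroot_coeff q k j * q ^ (k - j) * z ^ j)
          - (\<Sum>j\<le>k. qroot_coeff q k j * q ^ (k - j) * z ^ j)" .
    also have "\<dots> = (z - 1) * (\<Prod>t<k. z - q ^ Suc t)"
      by (simp only: qroot_coeff_prod_shifted) (simp add: algebra_simps)
    also have "\<dots> = (\<Prod>t<Suc k. z - q ^ t)"
      by (simp only: prod.lessThan_Suc_shift) simp
    finally show ?thesis using qroot_coeff_prod[of q "Suc k" z] by metis
  qed
  then have "\<forall>i\<le>Suc k. qroot_coeff q (Suc k) i = R i"
    using polyfun_eq_coeffs by blast
  with True show ?thesis by (simp add: R_def)
qed (simp add: qroot_coeff_eq_0)

lemma qroot_coeff_power_sum: "m < k \<Longrightarrow> (\<Sum>j\<le>k. qroot_coeff q k j * (q ^ j) ^ m) = 0"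
proof -
  assume "m < k"
  have "(\<Sum>j\<le>k. qroot_coeff q k j * (q ^ j) ^ m) = (\<Sum>j\<le>k. qroot_coeff q k j * (q ^ m) ^ j)"
    by (simp add: power_mult[symmetric] mult.commute)
  also have "\<dots> = (\<Prod>t<k. q ^ m - q ^ t)" by (rule qroot_coeff_prod)
  also have "\<dots> = 0" using \<open>m < k\<close> by (intro prod_zero) auto
  finally show ?thesis .
qed

fun linprod_coeff :: "(nat \<Rightarrow> complex) \<Rightarrow> nat \<Rightarrow> nat \<Rightarrow> complex" where
  "linprod_coeff \<beta> 0 m = (if m = 0 then 1 else 0)"
| "linprod_coeff \<beta> (Suc n) m =
     linprod_coeff \<beta> n m - \<beta> n * (if m = 0 then 0 else linprod_coeff \<beta> n (m - 1))"

lemma linprod_coeff_eq_0: "n < m \<Longrightarrow> linprod_coeff \<beta> n m = 0"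
  by (induction n arbitrary: m) auto

lemma prod_linear_eq_sum: "(\<Prod>s<n. 1 - \<beta> s * y) = (\<Sum>m\<le>n. linprod_coeff \<beta> n m * y ^ m)"
proof (induction n)
  case (Suc n)
  have "(\<Sum>m\<le>Suc n. linprod_coeff \<beta> (Suc n) m * y ^ m)
      = (\<Sum>m\<le>Suc n. linprod_coeff \<beta> n m * y ^ m)
        - \<beta> n * (\<Sum>m\<le>Suc n. (if m = 0 then 0 else linprod_coeff \<beta> n (m - 1)) * y ^ m)"
    by (simp add: algebra_simps sum_subtractf sum_distrib_left)
  also have "(\<Sum>m\<le>Suc n. (if m = 0 then 0 else linprod_coeff \<beta> n (m - 1)) * y ^ m)
      = y * (\<Sum>m\<le>n. linprod_coeff \<beta> n m * y ^ m)"
    by (subst sum.atMost_Suc_shift) (simp add: sum_distrib_left mult_ac)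
  also have "(\<Sum>m\<le>Suc n. linprod_coeff \<beta> n m * y ^ m) = (\<Sum>m\<le>n. linprod_coeff \<beta> n m * y ^ m)"
    by (simp add: linprod_coeff_eq_0)
  finally show ?case using Suc by (simp add: algebra_simps)
qed simp

lemma prod_linear_reflected:
  "(\<Sum>m\<le>n. linprod_coeff \<beta> n m * A ^ (n - m)) = (\<Prod>s<n. A - \<beta> s)"
proof (induction n)
  case (Suc n)
  have "(\<Sum>m\<le>Suc n. linprod_coeff \<beta> (Suc n) m * A ^ (Suc n - m))
      = (\<Sum>m\<le>Suc n. linprod_coeff \<beta> n m * A ^ (Suc n - m))
        - \<beta> n * (\<Sum>m\<le>Suc n. (if m = 0 then 0 else linprod_coeff \<beta> n (m - 1)) * A ^ (Suc n - m))"
    by (simp add: algebra_simps sum_subtractf sum_distrib_left)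
  also have "(\<Sum>m\<le>Suc n. (if m = 0 then 0 else linprod_coeff \<beta> n (m - 1)) * A ^ (Suc n - m))
      = (\<Sum>m\<le>n. linprod_coeff \<beta> n m * A ^ (n - m))"
    by (subst sum.atMost_Suc_shift) (simp add: sum_distrib_left mult_ac)
  also have "(\<Sum>m\<le>Suc n. linprod_coeff \<beta> n m * A ^ (Suc n - m))
      = A * (\<Sum>m\<le>n. linprod_coeff \<beta> n m * A ^ (n - m))"
    by (simp add: linprod_coeff_eq_0 sum_distrib_left Suc_diff_le mult_ac)
  finally show ?case using Suc by (simp add: algebra_simps)
qed simp

lemma qroot_coeff_prod_linear_sum:
  assumes "n < k"
  shows "(\<Sum>j\<le>k. qroot_coeff q k j * (\<Prod>s<n. 1 - \<beta> s * q ^ j)) = 0"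
proof -
  have "(\<Sum>j\<le>k. qroot_coeff q k j * (\<Prod>s<n. 1 - \<beta> s * q ^ j))
      = (\<Sum>m\<le>n. linprod_coeff \<beta> n m * (\<Sum>j\<le>k. qroot_coeff q k j * (q ^ j) ^ m))"
    by (simp add: prod_linear_eq_sum sum_distrib_left mult_ac sum.swap[of _ "{..k}"])
  also have "\<dots> = 0"
    using assms by (intro sum.neutral) (simp add: qroot_coeff_power_sum)
  finally show ?thesis .
qed

definition signed_qfact :: "complex \<Rightarrow> nat \<Rightarrow> complex" where
  "signed_qfact q k = (-1) ^ k * q ^ (k choose 2) * qpoch q q k"

lemma signed_qfact_Suc: "signed_qfact q (Suc k) = - (q ^ k * signed_qfact q k * (1 - q ^ k * q))"
  by (simp add: signed_qfact_def qpoch_Suc power_add choose_two_Suc algebra_simps)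

lemma qroot_coeff_partial_fraction_top:
  assumes "qpoch A q (Suc k) \<noteq> 0"
  shows "(\<Sum>j\<le>k. qroot_coeff q k j * (q ^ j) ^ k / (1 - q ^ j * A))
       = signed_qfact q k / qpoch A q (Suc k)"
  using assms
proof (induction k arbitrary: A)
  case 0
  then show ?case by (simp add: signed_qfact_def qpoch_def numeral_2_eq_2)
next
  case (Suc k)
  define D where "D = qpoch A q (Suc (Suc k))"
  have D_left: "D = (1 - A) * qpoch (q * A) q (Suc k)" and D_right: "D = qpoch A q (Suc k) * (1 - q ^ Suc k * A)"
    unfolding D_def by (rule qpoch_Suc_left, rule qpoch_Suc)
  have "D \<noteq> 0" using Suc.prems by (simp add: D_def)
  then have nz: "qpoch (q * A) q (Suc k) \<noteq> 0" "qpoch A q (Suc k) \<noteq> 0"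
    using D_left D_right by auto
  have exp_left: "q ^ (k - i) * (q ^ Suc i) ^ Suc k = q ^ Suc (2 * k) * (q ^ i) ^ k" if "i \<le> k" for i
  proof -
    have "k - i + Suc i * Suc k = Suc (2 * k) + i * k" using that by (simp add: algebra_simps)
    then show ?thesis by (simp only: power_mult[symmetric] power_add[symmetric])
  qed
  have exp_right: "q ^ (k - j) * (q ^ j) ^ Suc k = q ^ k * (q ^ j) ^ k" if "j \<le> k" for j
  proof -
    have "k - j + j * Suc k = k + j * k" using that by (simp add: algebra_simps)
    then show ?thesis by (simp only: power_mult[symmetric] power_add[symmetric])
  qed
  have shifted: "(\<Sum>j\<le>Suc k. (if j = 0 then 0 else q ^ (Suc k - j) * qroot_coeff q k (j - 1))
                      * (q ^ j) ^ Suc k / (1 - q ^ j * A))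
      = q ^ Suc (2 * k) * (\<Sum>j\<le>k. qroot_coeff q k j * (q ^ j) ^ k / (1 - q ^ j * (q * A)))"
    by (subst sum.atMost_Suc_shift, simp add: sum_distrib_left, intro sum.cong refl)
      (use exp_left in \<open>auto simp: mult_ac\<close>)
  have unshifted: "(\<Sum>j\<le>Suc k. q ^ (k - j) * qroot_coeff q k j * (q ^ j) ^ Suc k / (1 - q ^ j * A))
      = q ^ k * (\<Sum>j\<le>k. qroot_coeff q k j * (q ^ j) ^ k / (1 - q ^ j * A))"
    by (simp add: qroot_coeff_eq_0 sum_distrib_left, intro sum.cong refl)
      (use exp_right in \<open>auto simp: mult_ac\<close>)
  have "(\<Sum>j\<le>Suc k. qroot_coeff q (Suc k) j * (q ^ j) ^ Suc k / (1 - q ^ j * A))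
     = (\<Sum>j\<le>Suc k. (if j = 0 then 0 else q ^ (Suc k - j) * qroot_coeff q k (j - 1))
                      * (q ^ j) ^ Suc k / (1 - q ^ j * A))
       - (\<Sum>j\<le>Suc k. q ^ (k - j) * qroot_coeff q k j * (q ^ j) ^ Suc k / (1 - q ^ j * A))"
    unfolding qroot_coeff_Suc_left by (simp add: sum_subtractf diff_divide_distrib algebra_simps)
  also have "\<dots> = q ^ Suc (2 * k) * (\<Sum>j\<le>k. qroot_coeff q k j * (q ^ j) ^ k / (1 - q ^ j * (q * A)))
                 - q ^ k * (\<Sum>j\<le>k. qroot_coeff q k j * (q ^ j) ^ k / (1 - q ^ j * A))"
    unfolding shifted unshifted ..
  also have "\<dots> = q ^ k * (q ^ Suc k * (signed_qfact q k / qpoch (q * A) q (Suc k))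
                           - signed_qfact q k / qpoch A q (Suc k))"
    unfolding Suc.IH[OF nz(1)] Suc.IH[OF nz(2)] by (simp add: power_add[symmetric] mult_2 mult_2_right algebra_simps)
  also have "\<dots> = q ^ k * signed_qfact q k * (q ^ Suc k * (1 - A) - (1 - q ^ Suc k * A)) / D"
  proof -
    have left: "signed_qfact q k / qpoch (q * A) q (Suc k) = signed_qfact q k * (1 - A) / D"
      using \<open>D \<noteq> 0\<close> unfolding D_left by simp
    have right: "signed_qfact q k / qpoch A q (Suc k) = signed_qfact q k * (1 - q ^ Suc k * A) / D"
      using \<open>D \<noteq> 0\<close> unfolding D_right by simp
    show ?thesis unfolding left right by (simp add: diff_divide_distrib algebra_simps)
  qed
  also have "\<dots> = signed_qfact q (Suc k) / D"
    by (simp add: signed_qfact_Suc algebra_simps)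
  finally show ?case by (simp only: D_def)
qed

lemma qroot_coeff_partial_fraction_power:
  assumes "m \<le> k" and nz: "qpoch A q (Suc k) \<noteq> 0"
  shows "(\<Sum>j\<le>k. qroot_coeff q k j * (q ^ j) ^ m / (1 - q ^ j * A))
       = signed_qfact q k * A ^ (k - m) / qpoch A q (Suc k)"
  using assms(1)
proof (induction "k - m" arbitrary: m)
  case 0
  then show ?case using qroot_coeff_partial_fraction_top[OF nz] by simp
next
  case (Suc d)
  then have "m < k" by simp
  have denom: "1 - q ^ j * A \<noteq> 0" if "j \<le> k" for j
    using qpoch_factor_neq_0[OF nz, of j] that by simp
  have "(\<Sum>j\<le>k. qroot_coeff q k j * (q ^ j) ^ m / (1 - q ^ j * A))
        - A * (\<Sum>j\<le>k. qroot_coeff q k j * (q ^ j) ^ Suc m / (1 - q ^ j * A))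
      = (\<Sum>j\<le>k. qroot_coeff q k j * (q ^ j) ^ m * (1 - q ^ j * A) / (1 - q ^ j * A))"
    by (simp add: sum_distrib_left sum_subtractf diff_divide_distrib algebra_simps)
  also have "\<dots> = (\<Sum>j\<le>k. qroot_coeff q k j * (q ^ j) ^ m)"
    using denom by (intro sum.cong) auto
  also have "\<dots> = 0"
    using \<open>m < k\<close> by (rule qroot_coeff_power_sum)
  finally have "(\<Sum>j\<le>k. qroot_coeff q k j * (q ^ j) ^ m / (1 - q ^ j * A))
      = A * (\<Sum>j\<le>k. qroot_coeff q k j * (q ^ j) ^ Suc m / (1 - q ^ j * A))"
    by simp
  also have "\<dots> = A * (signed_qfact q k * A ^ (k - Suc m) / qpoch A q (Suc k))"
    using Suc.hyps(1)[of "Suc m"] Suc.hyps(2) \<open>m < k\<close> by simp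
  also have "\<dots> = signed_qfact q k * A ^ (k - m) / qpoch A q (Suc k)"
    using \<open>m < k\<close> by (simp add: Suc_diff_Suc[symmetric])
  finally show ?case .
qed

lemma qroot_coeff_partial_fraction_prod:
  assumes "qpoch A q (Suc k) \<noteq> 0"
  shows "(\<Sum>j\<le>k. qroot_coeff q k j * (\<Prod>s<k. 1 - \<beta> s * q ^ j) / (1 - q ^ j * A))
       = signed_qfact q k * (\<Prod>s<k. A - \<beta> s) / qpoch A q (Suc k)"
proof -
  have "(\<Sum>j\<le>k. qroot_coeff q k j * (\<Prod>s<k. 1 - \<beta> s * q ^ j) / (1 - q ^ j * A))
      = (\<Sum>j\<le>k. \<Sum>m\<le>k. linprod_coeff \<beta> k m * (qroot_coeff q k j * (q ^ j) ^ m / (1 - q ^ j * A)))"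
    by (simp add: prod_linear_eq_sum sum_distrib_left sum_divide_distrib mult_ac)
  also have "\<dots> = (\<Sum>m\<le>k. linprod_coeff \<beta> k m * (\<Sum>j\<le>k. qroot_coeff q k j * (q ^ j) ^ m / (1 - q ^ j * A)))"
    by (subst sum.swap) (simp add: sum_distrib_left)
  also have "\<dots> = (\<Sum>m\<le>k. linprod_coeff \<beta> k m * (signed_qfact q k * A ^ (k - m) / qpoch A q (Suc k)))"
    using assms by (intro sum.cong) (simp_all add: qroot_coeff_partial_fraction_power)
  also have "\<dots> = signed_qfact q k * (\<Sum>m\<le>k. linprod_coeff \<beta> k m * A ^ (k - m)) / qpoch A q (Suc k)"
    by (simp add: sum_distrib_left sum_divide_distrib mult_ac)
  finally show ?thesis
    by (simp only: prod_linear_reflected)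
qed

subsection \<open>Triangularization of the Hankel matrix\<close>

text \<open>Row \<open>k\<close> of the unit lower triangular matrix that makes the Hankel matrix upper triangular.\<close>

definition elim_coeff :: "complex \<Rightarrow> complex \<Rightarrow> complex \<Rightarrow> nat \<Rightarrow> nat \<Rightarrow> complex" where
  "elim_coeff q a b k j =
     qroot_coeff q k j * qpoch (q ^ j * b) q (k - j) / qpoch (q ^ (k - 1 + j) * a) q (k - j)"

lemma elim_coeff_diag [simp]: "elim_coeff q a b k k = 1"
  by (simp add: elim_coeff_def)

lemma prod_lessThan_add: "(\<Prod>s<i + (r::nat). f s) = (\<Prod>s<i. f s) * (\<Prod>u<r. f (i + u))"
  by (induction r) (simp_all add: mult_ac)

lemma elim_coeff_mult_cseq_below:
  assumes "i < k" and "j \<le> k" and nz: "qpoch a q (2 * k - 1) \<noteq> 0"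
  shows "elim_coeff q a b k j * cseq (i + j) a b q
       = qpoch b q k / qpoch a q (2 * k - 1)
         * (qroot_coeff q k j * (\<Prod>s<k - 1. 1 - (if s < i then q ^ s * b else q ^ s * a) * q ^ j))"
proof -
  have B1: "qpoch b q (i + j) = qpoch b q j * qpoch (q ^ j * b) q i"
    using qpoch_add[of b q j i] by (simp add: add.commute)
  have B2: "qpoch b q k = qpoch b q j * qpoch (q ^ j * b) q (k - j)"
    using qpoch_add[of b q j "k - j"] \<open>j \<le> k\<close> by simp
  have A1: "qpoch a q (k - 1 + j) = qpoch a q (i + j) * qpoch (q ^ (i + j) * a) q (k - 1 - i)"
  proof -
    have "k - 1 + j = (i + j) + (k - 1 - i)" using \<open>i < k\<close> by simp
    then show ?thesis by (simp only: qpoch_add)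
  qed
  have A2: "qpoch a q (2 * k - 1) = qpoch a q (k - 1 + j) * qpoch (q ^ (k - 1 + j) * a) q (k - j)"
  proof -
    have "2 * k - 1 = (k - 1 + j) + (k - j)" using assms(1,2) by simp
    then show ?thesis by (simp only: qpoch_add)
  qed
  have "(\<Prod>s<i + (k - 1 - i). 1 - (if s < i then q ^ s * b else q ^ s * a) * q ^ j)
      = qpoch (q ^ j * b) q i * qpoch (q ^ (i + j) * a) q (k - 1 - i)"
    unfolding prod_lessThan_add qpoch_def by (simp add: power_add mult_ac)
  then have P: "(\<Prod>s<k - 1. 1 - (if s < i then q ^ s * b else q ^ s * a) * q ^ j)
      = qpoch (q ^ j * b) q i * qpoch (q ^ (i + j) * a) q (k - 1 - i)"
    using \<open>i < k\<close> by simp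
  have "qpoch a q (i + j) \<noteq> 0" "qpoch (q ^ (i + j) * a) q (k - 1 - i) \<noteq> 0"
    "qpoch (q ^ (k - 1 + j) * a) q (k - j) \<noteq> 0"
    using nz unfolding A2 A1 by auto
  then show ?thesis
    unfolding elim_coeff_def cseq_def P B1 B2 A2 A1 by (simp add: divide_simps)
qed

lemma elim_coeff_mult_cseq_diag:
  assumes "1 \<le> k" and "j \<le> k" and nz: "qpoch a q (2 * k) \<noteq> 0"
  shows "elim_coeff q a b k j * cseq (k + j) a b q
       = qpoch b q k / qpoch a q (2 * k - 1)
         * (qroot_coeff q k j * (\<Prod>s<k. 1 - (q ^ s * b) * q ^ j) / (1 - q ^ j * (q ^ (k - 1) * a)))"
proof -
  have B1: "qpoch b q (k + j) = qpoch b q j * qpoch (q ^ j * b) q k"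
    using qpoch_add[of b q j k] by (simp add: add.commute)
  have B2: "qpoch b q k = qpoch b q j * qpoch (q ^ j * b) q (k - j)"
    using qpoch_add[of b q j "k - j"] \<open>j \<le> k\<close> by simp
  have A1: "qpoch a q (k + j) = qpoch a q (k - 1 + j) * (1 - q ^ j * (q ^ (k - 1) * a))"
  proof -
    have "q ^ (k - 1 + j) * a = q ^ j * (q ^ (k - 1) * a)" by (simp add: power_add mult_ac)
    moreover have "k + j = Suc (k - 1 + j)" using \<open>1 \<le> k\<close> by simp
    ultimately show ?thesis by (simp only: qpoch_Suc)
  qed
  have A2: "qpoch a q (2 * k - 1) = qpoch a q (k - 1 + j) * qpoch (q ^ (k - 1 + j) * a) q (k - j)"
  proof -
    have "2 * k - 1 = (k - 1 + j) + (k - j)" using assms(1,2) by simp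
    then show ?thesis by (simp only: qpoch_add)
  qed
  have P: "(\<Prod>s<k. 1 - (q ^ s * b) * q ^ j) = qpoch (q ^ j * b) q k"
    unfolding qpoch_def by (simp add: mult_ac)
  have "qpoch a q (k + j) \<noteq> 0" "qpoch a q (2 * k - 1) \<noteq> 0"
    using qpoch_neq_0_le[OF nz] \<open>j \<le> k\<close> by auto
  then have "qpoch a q (k - 1 + j) \<noteq> 0" "1 - q ^ j * (q ^ (k - 1) * a) \<noteq> 0"
    "qpoch (q ^ (k - 1 + j) * a) q (k - j) \<noteq> 0"
    unfolding A1 A2 by auto
  then show ?thesis
    unfolding elim_coeff_def cseq_def P B1 A1 A2 B2 by (simp add: divide_simps)
qed

lemma elim_row_below_diag:
  assumes "i < k" and "qpoch a q (2 * k - 1) \<noteq> 0"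
  shows "(\<Sum>j\<le>k. elim_coeff q a b k j * cseq (i + j) a b q) = 0"
proof -
  have "(\<Sum>j\<le>k. elim_coeff q a b k j * cseq (i + j) a b q)
      = qpoch b q k / qpoch a q (2 * k - 1)
        * (\<Sum>j\<le>k. qroot_coeff q k j * (\<Prod>s<k - 1. 1 - (if s < i then q ^ s * b else q ^ s * a) * q ^ j))"
    unfolding sum_distrib_left using assms by (intro sum.cong) (simp_all add: elim_coeff_mult_cseq_below)
  also have "\<dots> = 0"
    using assms(1) by (simp add: qroot_coeff_prod_linear_sum)
  finally show ?thesis .
qed

definition hankel_pivot :: "complex \<Rightarrow> complex \<Rightarrow> complex \<Rightarrow> nat \<Rightarrow> complex" where
  "hankel_pivot q a b k = q ^ (2 * (k choose 2)) *
     (qpoch b q k * qpoch q q k * (\<Prod>j<k. b - q ^ j * a) /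
      (qpoch (q ^ (k - 1) * a) q k * qpoch a q (2 * k)))"

lemma prod_diff_qpower_reflect:
  "(-1) ^ k * q ^ (k choose 2) * (\<Prod>s<k. q ^ (k - 1) * a - q ^ s * b)
   = q ^ (2 * (k choose 2)) * (\<Prod>j<k. b - q ^ j * (a::complex))"
proof -
  have "(\<Prod>s<k. q ^ (k - 1) * a - q ^ s * b) = (\<Prod>s<k. (-1) * q ^ s * (b - q ^ (k - Suc s) * a))"
  proof (rule prod.cong[OF refl])
    fix s assume "s \<in> {..<k}"
    then have "q ^ (k - 1) = q ^ s * q ^ (k - Suc s)"
      by (simp flip: power_add)
    then show "q ^ (k - 1) * a - q ^ s * b = (-1) * q ^ s * (b - q ^ (k - Suc s) * a)"
      by (simp add: algebra_simps)
  qed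
  also have "\<dots> = (-1) ^ k * (\<Prod>s<k. q ^ s) * (\<Prod>s<k. b - q ^ (k - Suc s) * a)"
    by (simp only: prod.distrib prod_constant card_lessThan)
  also have "\<dots> = (-1) ^ k * q ^ (k choose 2) * (\<Prod>j<k. b - q ^ j * a)"
    by (simp add: prod_power_lessThan prod.nat_diff_reindex[of "\<lambda>j. b - q ^ j * a"])
  finally have "(-1) ^ k * q ^ (k choose 2) * (\<Prod>s<k. q ^ (k - 1) * a - q ^ s * b)
      = ((-1) ^ k * (-1) ^ k) * (q ^ (k choose 2) * q ^ (k choose 2)) * (\<Prod>j<k. b - q ^ j * a)"
    by (simp add: mult_ac)
  then show ?thesis
    by (simp add: power_add[symmetric] mult_2 power_mult_distrib[symmetric])
qed

lemma elim_row_diag: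
  assumes "1 \<le> k" and nz: "qpoch a q (2 * k) \<noteq> 0"
  shows "(\<Sum>j\<le>k. elim_coeff q a b k j * cseq (k + j) a b q) = hankel_pivot q a b k"
proof -
  have "q ^ k * (q ^ (k - 1) * a) = q ^ (2 * k - 1) * a"
    using \<open>1 \<le> k\<close> by (simp add: mult.assoc power_add[symmetric] mult_2)
  then have Q1: "qpoch (q ^ (k - 1) * a) q (Suc k) = qpoch (q ^ (k - 1) * a) q k * (1 - q ^ (2 * k - 1) * a)"
    by (simp only: qpoch_Suc)
  have "2 * k = Suc (2 * k - 1)"
    using \<open>1 \<le> k\<close> by simp
  then have Q2: "qpoch a q (2 * k) = qpoch a q (2 * k - 1) * (1 - q ^ (2 * k - 1) * a)"
    by (metis qpoch_Suc)
  have "qpoch (q ^ (k - 1) * a) q (Suc k) \<noteq> 0"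
    using qpoch_shift_neq_0[OF nz, of "k - 1" "Suc k"] \<open>1 \<le> k\<close> by simp
  have "(\<Sum>j\<le>k. elim_coeff q a b k j * cseq (k + j) a b q)
      = qpoch b q k / qpoch a q (2 * k - 1)
        * (\<Sum>j\<le>k. qroot_coeff q k j * (\<Prod>s<k. 1 - (q ^ s * b) * q ^ j) / (1 - q ^ j * (q ^ (k - 1) * a)))"
    unfolding sum_distrib_left using assms by (intro sum.cong) (simp_all add: elim_coeff_mult_cseq_diag)
  also have "\<dots> = qpoch b q k / qpoch a q (2 * k - 1)
        * (signed_qfact q k * (\<Prod>s<k. q ^ (k - 1) * a - q ^ s * b) / qpoch (q ^ (k - 1) * a) q (Suc k))"
    by (simp only: qroot_coeff_partial_fraction_prod[OF \<open>qpoch (q ^ (k - 1) * a) q (Suc k) \<noteq> 0\<close>])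
  also have "\<dots> = qpoch b q k / qpoch a q (2 * k - 1)
        * (qpoch q q k * ((-1) ^ k * q ^ (k choose 2) * (\<Prod>s<k. q ^ (k - 1) * a - q ^ s * b))
           / qpoch (q ^ (k - 1) * a) q (Suc k))"
    by (simp add: signed_qfact_def mult_ac)
  also have "\<dots> = qpoch b q k / qpoch a q (2 * k - 1)
        * (qpoch q q k * (q ^ (2 * (k choose 2)) * (\<Prod>j<k. b - q ^ j * a))
           / (qpoch (q ^ (k - 1) * a) q k * (1 - q ^ (2 * k - 1) * a)))"
    by (simp only: prod_diff_qpower_reflect Q1)
  also have "\<dots> = hankel_pivot q a b k"
    unfolding hankel_pivot_def Q2 by (simp add: mult_ac)
  finally show ?thesis .
qed

lemma det_eq_prod_diag_of_unit_lower_mult: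
  fixes L H :: "'a::comm_ring_1 mat"
  assumes L: "L \<in> carrier_mat n n" and H: "H \<in> carrier_mat n n"
    and L_lower: "\<And>i j. i < j \<Longrightarrow> j < n \<Longrightarrow> L $$ (i, j) = 0"
    and L_diag: "\<And>i. i < n \<Longrightarrow> L $$ (i, i) = 1"
    and LH_upper: "\<And>i j. j < i \<Longrightarrow> i < n \<Longrightarrow> (L * H) $$ (i, j) = 0"
  shows "det H = (\<Prod>i<n. (L * H) $$ (i, i))"
proof -
  have "det L = 1"
    using det_lower_triangular[OF L_lower L] L by (simp add: prod_list_diag_prod L_diag)
  then have "det H = det (L * H)"
    using det_mult[OF L H] by simp
  also have "\<dots> = (\<Prod>i<n. (L * H) $$ (i, i))"
    using det_upper_triangular[of "L * H" n] L H LH_upper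
    by (auto simp: upper_triangular_def prod_list_diag_prod atLeast0LessThan)
  finally show ?thesis .
qed

lemma dhank_0_eq_prod_pivot:
  assumes "n \<ge> 1" and nz: "qpoch a q (2 * n - 2) \<noteq> 0"
  shows "dhank n 0 a b q = (\<Prod>k = 1..n - 1. hankel_pivot q a b k)"
proof -
  define H where "H = mat n n (\<lambda>(i, j). cseq (i + j + 0) a b q)"
  define L where "L = mat n n (\<lambda>(k, j). if j \<le> k then elim_coeff q a b k j else 0)"
  have L: "L \<in> carrier_mat n n" and H: "H \<in> carrier_mat n n"
    unfolding L_def H_def by auto
  have LH: "(L * H) $$ (k, i) = (\<Sum>j\<le>k. elim_coeff q a b k j * cseq (i + j) a b q)"
    if "k < n" "i < n" for k i
  proof -
    have "(L * H) $$ (k, i) = (\<Sum>j<n. if j \<le> k then elim_coeff q a b k j * cseq (i + j) a b q else 0)"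
      using that L H by (auto simp: scalar_prod_def L_def H_def atLeast0LessThan add.commute intro!: sum.cong)
    also have "\<dots> = (\<Sum>j\<le>k. elim_coeff q a b k j * cseq (i + j) a b q)"
      using that by (simp add: sum.If_cases Int_absorb1 subset_eq lessThan_def atMost_def)
    finally show ?thesis .
  qed
  have "dhank n 0 a b q = (\<Prod>k<n. (L * H) $$ (k, k))"
    unfolding dhank_def H_def[symmetric]
  proof (rule det_eq_prod_diag_of_unit_lower_mult[OF L H])
    fix k i assume "i < k" "k < n"
    moreover have "qpoch a q (2 * k - 1) \<noteq> 0"
      using qpoch_neq_0_le[OF nz] \<open>k < n\<close> by simp
    ultimately show "(L * H) $$ (k, i) = 0"
      by (simp add: LH elim_row_below_diag)
  qed (auto simp: L_def)
  also have "\<dots> = (\<Prod>k = 1..n - 1. hankel_pivot q a b k)"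
  proof -
    have "{..<n} = insert 0 {1..n - 1}" using \<open>n \<ge> 1\<close> by auto
    moreover have "(L * H) $$ (k, k) = hankel_pivot q a b k" if "k \<in> {1..n - 1}" for k
    proof -
      have "k < n" "1 \<le> k" "2 * k \<le> 2 * n - 2" using that \<open>n \<ge> 1\<close> by auto
      then show ?thesis using qpoch_neq_0_le[OF nz] by (simp add: LH elim_row_diag)
    qed
    ultimately show ?thesis
      using \<open>n \<ge> 1\<close> by (simp add: LH cseq_def)
  qed
  finally show ?thesis .
qed

lemma dhank_0_closed_form:
  assumes "n \<ge> 1" and "qpoch a q (2 * n - 2) \<noteq> 0"
  shows "dhank n 0 a b q = q ^ (2 * (n choose 3)) *
           (\<Prod>k = 1..n - 1. qpoch b q k * qpoch q q k * (\<Prod>j<k. b - q ^ j * a) /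
                              (qpoch (q ^ (k - 1) * a) q k * qpoch a q (2 * k)))"
proof -
  have "(\<Prod>k = 1..n - 1. q ^ (2 * (k choose 2))) = q ^ (\<Sum>k = 1..n - 1. 2 * (k choose 2))"
    by (rule power_sum[symmetric])
  also have "\<dots> = q ^ (2 * (n choose 3))"
    by (simp only: sum_distrib_left[symmetric] sum_choose_two_atLeast1)
  finally show ?thesis
    unfolding dhank_0_eq_prod_pivot[OF assms] hankel_pivot_def prod.distrib by simp
qed

subsection \<open>Shifting the Hankel matrix\<close>

lemma cseq_Suc: "cseq (Suc k) a b q = cseq 1 a b q * cseq k (q * a) (q * b) q"
proof -
  have "qpoch x q 1 = 1 - x" for x
    by (simp add: qpoch_def)
  then show ?thesis
    by (simp add: cseq_def qpoch_Suc_left)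
qed

lemma dhank_Suc: "dhank n (Suc m) a b q = cseq 1 a b q ^ n * dhank n m (q * a) (q * b) q"
proof -
  have "mat n n (\<lambda>(i, j). cseq (i + j + Suc m) a b q)
      = cseq 1 a b q \<cdot>\<^sub>m mat n n (\<lambda>(i, j). cseq (i + j + m) (q * a) (q * b) q)"
  proof -
    have "cseq (i + j + Suc m) a b q = cseq 1 a b q * cseq (i + j + m) (q * a) (q * b) q" for i j
      using cseq_Suc[of "i + j + m"] by simp
    then show ?thesis by (intro eq_matI) auto
  qed
  then show ?thesis
    unfolding dhank_def by simp
qed

text \<open>No nonvanishing hypothesis is needed: after clearing the shifted Pochhammer symbols both sides
  have literally the same numerator and denominator.\<close>

lemma hankel_pivot_shift:
  assumes "n \<ge> 1"
  shows "cseq 1 a b q * hankel_pivot q (q * a) (q * b) n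
           * (q ^ (n choose 2) * qpoch b q n / qpoch (q ^ (n - 1) * a) q n)
       = hankel_pivot q a b n
           * (q ^ (Suc n choose 2) * qpoch b q (Suc n) / qpoch (q ^ n * a) q (Suc n))"
proof -
  define E where "E = q ^ (2 * (n choose 2))"
  define B where "B = qpoch b q n"
  define Q where "Q = qpoch q q n"
  define P where "P = (\<Prod>j<n. b - q ^ j * a)"
  define X where "X = qpoch (q ^ (n - 1) * a) q n"
  define Y where "Y = qpoch a q (2 * n)"
  define X' where "X' = qpoch (q ^ n * a) q n"
  define Y' where "Y' = qpoch (q * a) q (2 * n)"
  define Z where "Z = qpoch (q ^ n * a) q (Suc n)"
  have shift: "q ^ (n - 1) * (q * a) = q ^ n * a"
    using \<open>n \<ge> 1\<close> by (simp add: power_eq_if)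
  have "(\<Prod>j<n. q * b - q ^ j * (q * a)) = (\<Prod>j<n. q * (b - q ^ j * a))"
    by (simp add: algebra_simps)
  then have prod_shift: "(\<Prod>j<n. q * b - q ^ j * (q * a)) = q ^ n * P"
    by (simp add: P_def prod.distrib)
  have pivot_shifted:
      "hankel_pivot q (q * a) (q * b) n = E * (qpoch (q * b) q n * Q * (q ^ n * P) / (X' * Y'))"
    unfolding hankel_pivot_def E_def Q_def X'_def Y'_def shift prod_shift ..
  have num: "(1 - b) * qpoch (q * b) q n = B * (1 - q ^ n * b)"
    using qpoch_Suc_left[of b q n] by (simp add: B_def qpoch_Suc)
  have den: "(1 - a) * Y' * X' = Y * Z"
  proof -
    have "(1 - a) * Y' = Y * (1 - q ^ (2 * n) * a)"
      using qpoch_Suc_left[of a q "2 * n"] by (simp add: Y_def Y'_def qpoch_Suc)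
    moreover have "Z = X' * (1 - q ^ (2 * n) * a)"
      by (simp add: Z_def X'_def qpoch_Suc power_add[symmetric] mult_2 mult.assoc)
    ultimately show ?thesis by (simp add: mult_ac)
  qed
  have c1: "cseq 1 a b q = (1 - b) / (1 - a)"
    by (simp add: cseq_def qpoch_def)
  have pivot: "hankel_pivot q a b n = E * (B * Q * P / (X * Y))"
    by (simp add: hankel_pivot_def E_def B_def Q_def P_def X_def Y_def)
  have B_Suc: "qpoch b q (Suc n) = B * (1 - q ^ n * b)"
    by (simp add: B_def qpoch_Suc)
  have choose_Suc: "q ^ (Suc n choose 2) = q ^ (n choose 2) * q ^ n"
    by (simp add: choose_two_Suc power_add)
  have "cseq 1 a b q * hankel_pivot q (q * a) (q * b) n * (q ^ (n choose 2) * B / X)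
      = E * Q * P * q ^ n * q ^ (n choose 2) * B * ((1 - b) * qpoch (q * b) q n) / ((1 - a) * Y' * X' * X)"
    unfolding pivot_shifted c1 by (simp add: mult_ac)
  also have "\<dots> = E * Q * P * q ^ n * q ^ (n choose 2) * B * (B * (1 - q ^ n * b)) / (Y * Z * X)"
    by (simp only: num den)
  also have "\<dots> = hankel_pivot q a b n * (q ^ (Suc n choose 2) * qpoch b q (Suc n) / Z)"
    unfolding pivot B_Suc choose_Suc by (simp add: mult_ac)
  finally show ?thesis
    by (simp only: B_def X_def Z_def)
qed

lemma prod_hankel_pivot_shift:
  assumes "n \<ge> 1"
  shows "cseq 1 a b q ^ n * (\<Prod>k = 1..n - 1. hankel_pivot q (q * a) (q * b) k)
       = (\<Prod>k = 1..n - 1. hankel_pivot q a b k)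
         * (q ^ (n choose 2) * qpoch b q n / qpoch (q ^ (n - 1) * a) q n)"
  using assms
proof (induction n rule: nat_induct_at_least)
  case base
  then show ?case by (simp add: cseq_def numeral_2_eq_2)
next
  case (Suc n)
  have range: "{1..Suc n - 1} = insert n {1..n - 1}" and "n \<notin> {1..n - 1}"
    using \<open>n \<ge> 1\<close> by auto
  then have "cseq 1 a b q ^ Suc n * (\<Prod>k = 1..Suc n - 1. hankel_pivot q (q * a) (q * b) k)
      = (cseq 1 a b q ^ n * (\<Prod>k = 1..n - 1. hankel_pivot q (q * a) (q * b) k))
        * (cseq 1 a b q * hankel_pivot q (q * a) (q * b) n)"
    by (simp add: mult_ac)
  also have "\<dots> = (\<Prod>k = 1..n - 1. hankel_pivot q a b k)
        * (cseq 1 a b q * hankel_pivot q (q * a) (q * b) n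
           * (q ^ (n choose 2) * qpoch b q n / qpoch (q ^ (n - 1) * a) q n))"
    unfolding Suc.IH by (simp add: mult_ac)
  also have "\<dots> = (\<Prod>k = 1..Suc n - 1. hankel_pivot q a b k)
        * (q ^ (Suc n choose 2) * qpoch b q (Suc n) / qpoch (q ^ (Suc n - 1) * a) q (Suc n))"
    unfolding hankel_pivot_shift[OF \<open>n \<ge> 1\<close>] range using \<open>n \<notin> {1..n - 1}\<close> by (simp add: mult_ac)
  finally show ?case .
qed

lemma dhank_1:
  assumes "n \<ge> 1" and nz: "qpoch a q (2 * n - 1) \<noteq> 0"
  shows "dhank n 1 a b q = dhank n 0 a b q * (q ^ (n choose 2) * qpoch b q n / qpoch (q ^ (n - 1) * a) q n)"
proof -
  have "2 * n - 1 = Suc (2 * n - 2)"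
    using \<open>n \<ge> 1\<close> by simp
  then have "qpoch a q (2 * n - 1) = (1 - a) * qpoch (q * a) q (2 * n - 2)"
    by (simp only: qpoch_Suc_left)
  then have "qpoch (q * a) q (2 * n - 2) \<noteq> 0" and "qpoch a q (2 * n - 2) \<noteq> 0"
    using nz qpoch_neq_0_le[OF nz, of "2 * n - 2"] by auto
  then show ?thesis
    using dhank_Suc[of n 0 a b q] prod_hankel_pivot_shift[OF \<open>n \<ge> 1\<close>, of a b q]
    by (simp add: dhank_0_eq_prod_pivot[OF \<open>n \<ge> 1\<close>])
qed

lemma dhank_closed_form:
  assumes "n \<ge> 1" and "qpoch a q (2 * n - 2 + m) \<noteq> 0"
  shows "dhank n m a b q = dhank n 0 a b q * q ^ (m * (n choose 2)) *
           (\<Prod>j<m. qpoch (q ^ j * b) q n / qpoch (q ^ (n - 1 + j) * a) q n)"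
  using assms(2)
proof (induction m arbitrary: a b)
  case (Suc m)
  define f where "f a b j = qpoch (q ^ j * b) q n / qpoch (q ^ (n - 1 + j) * a) q n" for a b j
  have shift: "f (q * a) (q * b) j = f a b (Suc j)" for j
    by (simp add: f_def mult_ac)
  have "qpoch a q (2 * n - 2 + Suc m) = (1 - a) * qpoch (q * a) q (2 * n - 2 + m)"
    by (simp only: add_Suc_right qpoch_Suc_left)
  then have "qpoch (q * a) q (2 * n - 2 + m) \<noteq> 0" and "qpoch a q (2 * n - 1) \<noteq> 0"
    using Suc.prems qpoch_neq_0_le[OF Suc.prems, of "2 * n - 1"] \<open>n \<ge> 1\<close> by auto
  have "dhank n (Suc m) a b q = cseq 1 a b q ^ n * dhank n m (q * a) (q * b) q"
    by (rule dhank_Suc)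
  also have "\<dots> = cseq 1 a b q ^ n * dhank n 0 (q * a) (q * b) q * q ^ (m * (n choose 2))
                   * (\<Prod>j<m. f a b (Suc j))"
    using Suc.IH[OF \<open>qpoch (q * a) q (2 * n - 2 + m) \<noteq> 0\<close>] by (simp add: f_def shift mult_ac)
  also have "\<dots> = dhank n 1 a b q * q ^ (m * (n choose 2)) * (\<Prod>j<m. f a b (Suc j))"
    using dhank_Suc[of n 0 a b q] by simp
  also have "\<dots> = dhank n 0 a b q * q ^ (Suc m * (n choose 2)) * (\<Prod>j<Suc m. f a b j)"
    unfolding dhank_1[OF \<open>n \<ge> 1\<close> \<open>qpoch a q (2 * n - 1) \<noteq> 0\<close>]
    by (simp add: f_def prod.lessThan_Suc_shift power_add mult_ac del: prod.lessThan_Suc)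
  finally show ?case by (simp only: f_def)
qed simp

theorem theorem2:
  fixes a b q :: complex and n m :: nat
  assumes "n \<ge> 1"
  shows "(qpoch a q (2 * n - 2) \<noteq> 0 \<longrightarrow>
           dhank n 0 a b q =
             q ^ (2 * (n choose 3)) *
             (\<Prod>k = 1..n - 1.
                qpoch b q k * qpoch q q k * (\<Prod>j<k. b - q ^ j * a) /
                (qpoch (q ^ (k - 1) * a) q k * qpoch a q (2 * k))))
       \<and> (qpoch a q (2 * n - 2 + m) \<noteq> 0 \<longrightarrow>
           dhank n m a b q =
             dhank n 0 a b q * q ^ (m * (n choose 2)) *
             (\<Prod>j<m. qpoch (q ^ j * b) q n / qpoch (q ^ (n - 1 + j) * a) q n))"
  using dhank_0_closed_form[OF assms] dhank_closed_form[OF assms] by blast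

end
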